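(* Let $f\in K[z]$ be a polynomial of degree $d\ge2$ with $\mathrm{Crit}(f)\cap J(f)\neq\emptyset$. Then there exist a constant $M\ge1$ and $N\ge 1$ such that for every $c\in\mathrm{Crit}(f)\cap J(f)$ and every $n\ge N$, the iterate $f^n$ has at most $M$ critical values (in $K$) lying in the disk $D_n(c)$.
   Context: $K$ is an algebraically closed field of characteristic $0$, complete with respect to a nontrivial nonarchimedean absolute value $|\cdot|$; $D(x,r)=\{y\in K:|y-x|<r\}$. Set $p=\mathrm{res.char}(K)$ if positive and $p=e$ otherwise. $\mathsf{P}^1$ is the Berkovich projective line over $K$, $\mathsf{A}^1=\mathsf{P}^1\setminus\{\infty\}$; $\|g\|_\xi$ is the value at $g$ of the seminorm $\xi$; a point corresponding to a closed disk $\overline D(x,r)$ has $\|g\|_\xi=\sup_{\overline D(x,r)}|g|$ and $\mathrm{diam}(\xi)=r$. $\deg_\xi f$ is the local degree, $\kappa(f)=\min\{\log_p|\deg_\xi f|:\xi\in\mathsf{P}^1\}$. $\mathcal{K}(f)$ is the set of $\xi\in\mathsf{A}^1$ with $f^n(\xi)\not\to\infty$, $J(f)=\partial\mathcal{K}(f)$. $\mathrm{Crit}(f)\subset K$ is the set of zeros of $f'$; critical values of $f^n$ are images under $f^n$ of zeros of $(f^n)'$. The base point $\xi_f$ corresponds to the smallest closed disk in $K$ containing $\mathcal{K}(f)\cap K$, $R_f=\mathrm{diam}(\xi_f)$, $\Xi_f=p^{-\kappa(f)}\|f'\|_{\xi_f}$, and for $s>0$, $x\in K$: $D_s(x)=D(x,R_f\Xi_f^{-s})$.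 *)

theory Defs
  imports Complex_Main "HOL-Computational_Algebra.Polynomial" "HOL-Computational_Algebra.Primes"
begin

text \<open>K is modelled as a type of class field_char_0 together with a function absv.\<close>

definition nonarch_complete_acf :: "('a::field_char_0 \<Rightarrow> real) \<Rightarrow> bool" where
  "nonarch_complete_acf absv \<longleftrightarrow>
     (\<forall>x. absv x \<ge> 0) \<and> (\<forall>x. absv x = 0 \<longleftrightarrow> x = 0) \<and>
     (\<forall>x y. absv (x * y) = absv x * absv y) \<and>
     (\<forall>x y. absv (x + y) \<le> max (absv x) (absv y)) \<and>
     (\<exists>x. absv x \<noteq> 0 \<and> absv x \<noteq> 1) \<and>
     (\<forall>X :: nat \<Rightarrow> 'a. (\<forall>e>0. \<exists>N. \<forall>m\<ge>N. \<forall>n\<ge>N. absv (X m - X n) < e)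
          \<longrightarrow> (\<exists>L. (\<lambda>n. absv (X n - L)) \<longlonglongrightarrow> 0)) \<and>
     (\<forall>p :: 'a poly. degree p \<ge> 1 \<longrightarrow> (\<exists>z. poly p z = 0))"

text \<open>p = residue characteristic if positive, e otherwise.\<close>
definition res_p :: "('a::field_char_0 \<Rightarrow> real) \<Rightarrow> real" where
  "res_p absv = (if \<exists>q::nat. prime q \<and> absv (of_nat q) < 1
                 then real (THE q::nat. prime q \<and> absv (of_nat q) < 1) else exp 1)"

definition fiter :: "'a::comm_ring_1 poly \<Rightarrow> nat \<Rightarrow> 'a poly" where
  "fiter f n = ((\<lambda>q. pcompose f q) ^^ n) [:0, 1:]"

text \<open>Classical points of the filled Julia set K(f).\<close>
definition filledK :: "('a::field_char_0 \<Rightarrow> real) \<Rightarrow> 'a poly \<Rightarrow> 'a set" where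
  "filledK absv f = {x. \<not> filterlim (\<lambda>n. absv ((poly f ^^ n) x)) at_top sequentially}"

text \<open>Classical points of J(f) = boundary of K(f) in the Berkovich line.\<close>
definition juliaK :: "('a::field_char_0 \<Rightarrow> real) \<Rightarrow> 'a poly \<Rightarrow> 'a set" where
  "juliaK absv f = {c \<in> filledK absv f. \<forall>r>0. \<exists>y. absv (y - c) < r \<and> y \<notin> filledK absv f}"

definition crit :: "'a::field_char_0 poly \<Rightarrow> 'a set" where
  "crit f = {z. poly (pderiv f) z = 0}"

definition critvals :: "'a::field_char_0 poly \<Rightarrow> nat \<Rightarrow> 'a set" where
  "critvals f n = {poly (fiter f n) w | w. poly (pderiv (fiter f n)) w = 0}"

definition Rf :: "('a::field_char_0 \<Rightarrow> real) \<Rightarrow> 'a poly \<Rightarrow> real" where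
  "Rf absv f = Inf {r. r \<ge> 0 \<and> (\<exists>a. filledK absv f \<subseteq> {y. absv (y - a) \<le> r})}"

definition base_center :: "('a::field_char_0 \<Rightarrow> real) \<Rightarrow> 'a poly \<Rightarrow> 'a" where
  "base_center absv f = (SOME a. a \<in> filledK absv f)"

text \<open>Seminorm of the point corresponding to the closed disk of center a, radius r.\<close>
definition supnorm :: "('a::field_char_0 \<Rightarrow> real) \<Rightarrow> 'a poly \<Rightarrow> 'a \<Rightarrow> real \<Rightarrow> real" where
  "supnorm absv g a r = Sup ((\<lambda>z. absv (poly g z)) ` {z. absv (z - a) \<le> r})"

text \<open>Local degrees: at a type I point x, and at the point of the closed disk (a,r), r>0
  (for polynomials this is the number of zeros of f - f(a) in the closed disk).\<close>
definition loc_deg_pt :: "'a::field_char_0 poly \<Rightarrow> 'a \<Rightarrow> nat" where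
  "loc_deg_pt f x = order x (f - [:poly f x:])"

definition loc_deg_disk :: "('a::field_char_0 \<Rightarrow> real) \<Rightarrow> 'a poly \<Rightarrow> 'a \<Rightarrow> real \<Rightarrow> nat" where
  "loc_deg_disk absv f a r =
     (\<Sum>z\<in>{z. absv (z - a) \<le> r \<and> poly (f - [:poly f a:]) z = 0}. order z (f - [:poly f a:]))"

definition kappa :: "('a::field_char_0 \<Rightarrow> real) \<Rightarrow> 'a poly \<Rightarrow> real" where
  "kappa absv f = Min ((\<lambda>k. log (res_p absv) (absv (of_nat k))) `
      ({loc_deg_pt f x | x. True} \<union> {loc_deg_disk absv f a r | a r. r > 0}))"

definition Xi :: "('a::field_char_0 \<Rightarrow> real) \<Rightarrow> 'a poly \<Rightarrow> real" where
  "Xi absv f = res_p absv powr (- kappa absv f) *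
      supnorm absv (pderiv f) (base_center absv f) (Rf absv f)"

definition Ds :: "('a::field_char_0 \<Rightarrow> real) \<Rightarrow> 'a poly \<Rightarrow> real \<Rightarrow> 'a \<Rightarrow> 'a set" where
  "Ds absv f s x = {y. absv (y - x) < Rf absv f * Xi absv f powr (- s)}"

end

theory Submission
  imports Defs
begin

text \<open>
  Let \<open>r = R\<^sub>f / \<Xi>\<^sub>f ^ n\<close> be the radius of \<open>D\<^sub>n(c)\<close>. A critical value of \<open>f\<^sup>n\<close> is a point
  \<open>f\<^sup>k(c')\<close> with \<open>c'\<close> critical and \<open>1 \<le> k \<le> n\<close>, so it suffices to show that no critical
  orbit visits \<open>D\<^sub>n(c)\<close> more than twice before time \<open>n\<close>.

  On the base disk \<open>f\<close> is \<open>\<Xi>\<^sub>f\<close>-Lipschitz: an ultrametric mean value inequality bounds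
  \<open>|m| |f(y) - f(x)|\<close> by \<open>|y - x|\<close> times the supremum of \<open>|f'|\<close>, where \<open>m\<close> is a local degree,
  and \<open>|m| \<ge> p\<^sup>\<kappa>\<close>. Since \<open>J(f) \<noteq> \<emptyset>\<close> the base disk is not forward invariant, which forces
  \<open>\<Xi>\<^sub>f > 1\<close>. Near the critical point \<open>c\<close> the map is quadratic, \<open>|f(c + w) - f(c)| \<le> C |w|\<^sup>2\<close>,
  so the orbit of the whole disk \<open>D\<^sub>n(c)\<close> shadows the orbit of \<open>c\<close> within distance \<open>r\<close> up to
  time \<open>n - g\<close>, for a constant \<open>g\<close> with \<open>C R\<^sub>f < \<Xi>\<^sub>f\<^sup>g\<close>. If some orbit visited \<open>D\<^sub>n(c)\<close> at two
  times \<open>m\<close> apart with \<open>m \<le> n - g\<close>, then \<open>f\<^sup>m\<close> would map \<open>D\<^sub>n(c)\<close> into itself, the disk would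
  lie in the filled Julia set, and \<open>c\<close> could not be in \<open>J(f)\<close>. Hence visits are more than
  \<open>n - g\<close> apart, there are at most two of them once \<open>n \<ge> 2g\<close>, and \<open>M = 2 #Crit(f) + 1\<close> works.
\<close>

section \<open>Polynomial algebra\<close>

definition roots_poly :: "'a::comm_ring_1 list \<Rightarrow> 'a poly" where
  "roots_poly bs = (\<Prod>b\<leftarrow>bs. [:- b, 1:])"

lemma roots_poly_Nil [simp]: "roots_poly [] = 1"
  by (simp add: roots_poly_def)

lemma roots_poly_Cons [simp]: "roots_poly (b # bs) = [:- b, 1:] * roots_poly bs"
  by (simp add: roots_poly_def)

lemma poly_roots_poly: "poly (roots_poly bs) x = (\<Prod>b\<leftarrow>bs. x - b)"
  by (induction bs) (simp_all add: algebra_simps)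

lemma roots_poly_nonzero [simp]: "roots_poly (bs :: 'a::idom list) \<noteq> 0"
  by (induction bs) (auto simp del: mult_pCons_left)

lemma poly_roots_poly_eq_0_iff: "poly (roots_poly (bs :: 'a::idom list)) x = 0 \<longleftrightarrow> x \<in> set bs"
  by (induction bs) auto

lemma order_roots_poly: "order w (roots_poly (bs :: 'a::idom list)) = count_list bs w"
proof (induction bs)
  case (Cons b bs)
  have "order w [:- b, 1:] = (if w = b then 1 else 0)"
    using order_power_n_n[of b 1] order_0I[of "[:- b, 1:]" w] by auto
  then show ?case using Cons by (simp add: order_mult del: mult_pCons_left)
qed (simp add: order_0I)

lemma degree_roots_poly: "degree (roots_poly (bs :: 'a::idom list)) = length bs"
  by (induction bs) (simp_all add: degree_mult_eq del: mult_pCons_left)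

lemma roots_poly_remove1:
  "u \<in> set bs \<Longrightarrow> roots_poly bs = [:- u, 1:] * roots_poly (remove1 u bs)"
  by (induction bs) (auto simp: mult.left_commute simp del: mult_pCons_left)

lemma coeff_linear_factor_mult:
  fixes h :: "'a::comm_ring_1 poly"
  shows "coeff ([:- b, 1:] * h) n =
    (if n = 0 then - b * coeff h 0 else - b * coeff h n + coeff h (n - 1))"
  by (cases n) simp_all

lemma coeff_roots_poly_length: "coeff (roots_poly (bs :: 'a::idom list)) (length bs) = 1"
  by (induction bs)
     (simp_all add: coeff_linear_factor_mult coeff_eq_0 degree_roots_poly del: mult_pCons_left)

lemma pcompose_power_left: "pcompose (p ^ n) q = pcompose p q ^ n"
  by (induction n) (simp_all add: pcompose_mult pcompose_1)

lemma order_pcompose_shift: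
  fixes p :: "'a::idom poly"
  assumes "p \<noteq> 0"
  shows "order a (pcompose p [:x, 1:]) = order (a + x) p"
proof -
  obtain q where q: "p = [:- (a + x), 1:] ^ order (a + x) p * q" "\<not> [:- (a + x), 1:] dvd q"
    using order_decomp[OF assms] by blast
  have "pcompose p [:x, 1:] = [:- a, 1:] ^ order (a + x) p * pcompose q [:x, 1:]"
    by (subst q(1)) (simp add: pcompose_mult pcompose_power_left pcompose_pCons)
  moreover have "poly (pcompose q [:x, 1:]) a \<noteq> 0"
    using q(2) by (simp add: poly_pcompose poly_eq_0_iff_dvd add.commute)
  moreover from this have "pcompose q [:x, 1:] \<noteq> 0" by auto
  ultimately show ?thesis
    by (simp add: order_mult order_power_n_n order_0I)
qed

definition lagrange_basis :: "'a::field set \<Rightarrow> 'a \<Rightarrow> 'a poly" where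
  "lagrange_basis U u = smult (inverse (\<Prod>v\<in>U - {u}. u - v)) (\<Prod>v\<in>U - {u}. [:- v, 1:])"

lemma poly_lagrange_basis:
  assumes "finite U" "u \<in> U" "w \<in> U"
  shows "poly (lagrange_basis U u) w = (if w = u then 1 else 0)"
  using assms by (auto simp: lagrange_basis_def poly_prod)

lemma degree_lagrange_basis:
  assumes "finite U" "u \<in> U"
  shows "degree (lagrange_basis U u) < card U"
proof -
  have "degree (lagrange_basis U u) \<le> sum (degree \<circ> (\<lambda>v. [:- v, 1:])) (U - {u})"
    unfolding lagrange_basis_def
    using assms(1) by (intro order.trans[OF degree_smult_le] degree_prod_sum_le) auto
  also have "\<dots> = card U - 1" using assms by simp
  moreover have "card U > 0" using assms card_gt_0_iff by blast
  ultimately show ?thesis by linarith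
qed

lemma lagrange_interpolation:
  fixes P :: "'a::field poly"
  assumes U: "finite U" "degree P < card U"
  shows "P = (\<Sum>u\<in>U. smult (poly P u) (lagrange_basis U u))" (is "P = ?I")
proof (rule ccontr)
  assume "P \<noteq> ?I"
  then have nz: "?I - P \<noteq> 0" by simp
  have "poly ?I w = poly P w" if w: "w \<in> U" for w
  proof -
    have "poly ?I w = (\<Sum>u\<in>U. poly P u * poly (lagrange_basis U u) w)"
      by (simp add: poly_sum)
    also have "\<dots> = (\<Sum>u\<in>U. if w = u then poly P u else 0)"
      using w U(1) by (intro sum.cong) (simp_all add: poly_lagrange_basis)
    also have "\<dots> = poly P w" using w U(1) by simp
    finally show ?thesis .
  qed
  then have "U \<subseteq> {x. poly (?I - P) x = 0}" by auto
  then have "card U \<le> degree (?I - P)"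
    using card_mono[OF poly_roots_finite[OF nz]] card_poly_roots_bound[OF nz] by (meson order.trans)
  moreover have "degree ?I \<le> card U - 1"
  proof (rule degree_sum_le[OF U(1)])
    fix u assume "u \<in> U"
    then show "degree (smult (poly P u) (lagrange_basis U u)) \<le> card U - 1"
      using degree_smult_le[of "poly P u" "lagrange_basis U u"] degree_lagrange_basis[OF U(1)]
      by fastforce
  qed
  ultimately show False
    using degree_diff_le_max[of ?I P] U(2) by linarith
qed

lemma prod_list_unit_interval_eq_1:
  fixes xs :: "real list"
  assumes "\<forall>x\<in>set xs. 0 \<le> x \<and> x \<le> 1" "prod_list xs = 1"
  shows "\<forall>x\<in>set xs. x = 1"
  using assms
proof (induction xs)
  case (Cons x xs)
  have "prod_list ys \<le> 1" if "\<forall>y\<in>set ys. 0 \<le> y \<and> y \<le> (1::real)" for ys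
    using that by (induction ys) (auto intro: mult_le_one prod_list_nonneg)
  then have "prod_list xs \<le> 1" "0 \<le> prod_list xs"
    using Cons.prems(1) by (auto intro!: prod_list_nonneg)
  moreover have "0 \<le> x" "x \<le> 1" "x * prod_list xs = 1" using Cons.prems by auto
  ultimately have "x = 1" "prod_list xs = 1"
    using mult_left_le[of "prod_list xs" x] mult_left_le_one_le[of "prod_list xs" x] by auto
  moreover have "\<forall>y\<in>set xs. y = 1"
    using Cons.prems(1) \<open>prod_list xs = 1\<close> by (intro Cons.IH) auto
  ultimately show ?case by simp
qed simp

lemma distinct_if_notin_remove1:
  "(\<And>u. u \<in> set bs \<Longrightarrow> u \<notin> set (remove1 u bs)) \<Longrightarrow> distinct bs"
proof (induction bs)
  case (Cons b bs)
  then have "b \<notin> set bs" using Cons.prems[of b] by simp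
  moreover have "u \<notin> set (remove1 u bs)" if "u \<in> set bs" for u
    using Cons.prems[of u] that \<open>b \<notin> set bs\<close> by (auto split: if_splits)
  ultimately show ?case using Cons.IH by simp
qed simp

section \<open>Ultrametric absolute values\<close>

locale ultrametric_abs =
  fixes absv :: "'a::field_char_0 \<Rightarrow> real"
  assumes absv_nonneg [simp]: "absv x \<ge> 0"
    and absv_eq_0_iff [simp]: "absv x = 0 \<longleftrightarrow> x = 0"
    and absv_mult: "absv (x * y) = absv x * absv y"
    and absv_add_le_max: "absv (x + y) \<le> max (absv x) (absv y)"
begin

lemma absv_pos: "x \<noteq> 0 \<Longrightarrow> absv x > 0"
  using absv_nonneg[of x] absv_eq_0_iff[of x] by linarith

lemma absv_0 [simp]: "absv 0 = 0"
  by simp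

lemma absv_1 [simp]: "absv 1 = 1"
  using absv_mult[of 1 1] mult_left_cancel[of "absv 1" "absv 1" 1] by simp

lemma absv_uminus [simp]: "absv (- x) = absv x"
proof -
  have "absv (-1) * absv (-1) = 1" using absv_mult[of "-1" "-1"] by simp
  then have "absv (-1) = 1"
    using absv_nonneg[of "-1"] by (metis abs_of_nonneg abs_square_eq_1 power2_eq_square)
  then show ?thesis using absv_mult[of "-1" x] by simp
qed

lemma absv_minus_commute: "absv (x - y) = absv (y - x)"
  by (metis absv_uminus minus_diff_eq)

lemma absv_diff_le_max: "absv (x - y) \<le> max (absv x) (absv y)"
  using absv_add_le_max[of x "- y"] by simp

lemma absv_add_le: "absv (x + y) \<le> absv x + absv y"
  using absv_add_le_max[of x y] absv_nonneg[of x] absv_nonneg[of y] by linarith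

lemma absv_add_le_bound: "absv x \<le> C \<Longrightarrow> absv y \<le> C \<Longrightarrow> absv (x + y) \<le> C"
  using absv_add_le_max[of x y] by simp

lemma absv_diff_trans_le: "absv (x - y) \<le> r \<Longrightarrow> absv (y - z) \<le> r \<Longrightarrow> absv (x - z) \<le> r"
  using absv_add_le_bound[of "x - y" r "y - z"] by simp

lemma absv_diff_trans_less: "absv (x - y) < r \<Longrightarrow> absv (y - z) < r \<Longrightarrow> absv (x - z) < r"
  using absv_add_le_max[of "x - y" "y - z"] by simp

lemma absv_power: "absv (x ^ n) = absv x ^ n"
  by (induction n) (auto simp: absv_mult)

lemma absv_inverse: "absv (inverse x) = inverse (absv x)"
  by (cases "x = 0") (auto simp: field_simps absv_mult[symmetric])

lemma absv_prod: "absv (prod g S) = (\<Prod>x\<in>S. absv (g x))"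
  by (induction S rule: infinite_finite_induct) (simp_all add: absv_mult)

lemma absv_prod_list: "absv (prod_list xs) = prod_list (map absv xs)"
  by (induction xs) (simp_all add: absv_mult)

lemma absv_add_eq_left:
  assumes "absv y < absv x"
  shows "absv (x + y) = absv x"
proof -
  have "absv x \<le> max (absv (x + y)) (absv y)"
    using absv_diff_le_max[of "x + y" y] by simp
  then show ?thesis using absv_add_le_max[of x y] assms by auto
qed

lemma absv_sum_le_bound:
  "C \<ge> 0 \<Longrightarrow> (\<And>i. i \<in> I \<Longrightarrow> absv (g i) \<le> C) \<Longrightarrow> absv (sum g I) \<le> C"
  by (induction I rule: infinite_finite_induct) (simp_all add: absv_add_le_bound)

lemma absv_sum_less_bound:
  "C > 0 \<Longrightarrow> (\<And>i. i \<in> I \<Longrightarrow> absv (g i) < C) \<Longrightarrow> absv (sum g I) < C"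
proof (induction I rule: infinite_finite_induct)
  case (insert x F)
  then show ?case using absv_add_le_max[of "g x" "sum g F"] by (simp add: le_less_trans)
qed simp_all

lemma absv_sum_le: "absv (sum g I) \<le> (\<Sum>i\<in>I. absv (g i))"
  by (induction I rule: infinite_finite_induct)
     (simp_all add: order.trans[OF absv_add_le])

lemma absv_of_nat_le_1: "absv (of_nat n) \<le> 1"
  by (induction n) (auto simp: absv_add_le_bound)

lemma absv_of_nat_or_Suc_eq_1: "absv (of_nat n) = 1 \<or> absv (of_nat (Suc n)) = 1"
  using absv_diff_le_max[of "of_nat (Suc n)" "of_nat n"] absv_of_nat_le_1[of n]
    absv_of_nat_le_1[of "Suc n"] by (auto simp: max_def split: if_splits)

lemma absv_prime_lt_1_unique:
  assumes q: "prime q" "absv (of_nat q) < 1" and q': "prime q'" "absv (of_nat q') < 1"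
  shows "q' = q"
proof (rule ccontr)
  assume "q' \<noteq> q"
  then have "gcd q q' = 1" using q q' by (simp add: primes_coprime)
  moreover have "q \<noteq> 0" using q(1) by auto
  ultimately obtain x y where "q * x = q' * y + 1" using bezout_nat by metis
  then have "(of_nat q * of_nat x :: 'a) - of_nat q' * of_nat y = 1"
    by (metis add_diff_cancel_left' of_nat_1 of_nat_add of_nat_mult)
  then have "1 \<le> max (absv (of_nat q * of_nat x :: 'a)) (absv (of_nat q' * of_nat y :: 'a))"
    using absv_diff_le_max[of "of_nat q * of_nat x :: 'a" "of_nat q' * of_nat y"] by simp
  moreover have "absv (of_nat q * of_nat x :: 'a) < 1" "absv (of_nat q' * of_nat y :: 'a) < 1"
    using mult_left_le[OF absv_of_nat_le_1[of x], of "absv (of_nat q :: 'a)"]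
      mult_left_le[OF absv_of_nat_le_1[of y], of "absv (of_nat q' :: 'a)"] q(2) q'(2)
    by (simp_all add: absv_mult)
  ultimately show False by linarith
qed

lemma res_p_gt_1: "res_p absv > 1"
proof (cases "\<exists>q::nat. prime q \<and> absv (of_nat q) < 1")
  case True
  then obtain q where q: "prime q" "absv (of_nat q) < 1" by blast
  have "(THE q::nat. prime q \<and> absv (of_nat q) < 1) = q"
    using q absv_prime_lt_1_unique by blast
  then show ?thesis using q True prime_gt_1_nat by (simp add: res_p_def)
next
  case False
  then show ?thesis unfolding res_p_def by (subst if_not_P) auto
qed

lemma absv_sum_mult_le_bound:
  assumes "s \<ge> 0" "C \<ge> 0" "\<And>i. i \<in> I \<Longrightarrow> absv (g i) * s \<le> C"
  shows "absv (sum g I) * s \<le> C"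
  using assms(3)
proof (induction I rule: infinite_finite_induct)
  case (insert x F)
  have "absv (g x + sum g F) * s \<le> max (absv (g x)) (absv (sum g F)) * s"
    using assms(1) by (intro mult_right_mono absv_add_le_max)
  also have "\<dots> \<le> C"
    using insert assms(1) by (simp add: max_mult_distrib_right)
  finally show ?case using insert by simp
qed (use assms(2) in simp_all)

lemma absv_coeff_mult_weighted_le:
  assumes t: "t \<ge> 0"
    and p: "\<And>i. absv (coeff p i) * t ^ i \<le> A" and q: "\<And>i. absv (coeff q i) * t ^ i \<le> B"
  shows "absv (coeff (p * q) n) * t ^ n \<le> A * B"
proof -
  have "absv (coeff p 0) \<le> A" "absv (coeff q 0) \<le> B"
    using p[of 0] q[of 0] by simp_all
  then have AB: "A \<ge> 0" "B \<ge> 0"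
    by (meson absv_nonneg order.trans)+
  have "absv (coeff p i * coeff q (n - i)) * t ^ n \<le> A * B" if "i \<in> {..n}" for i
  proof -
    have "absv (coeff p i * coeff q (n - i)) * t ^ n =
        (absv (coeff p i) * t ^ i) * (absv (coeff q (n - i)) * t ^ (n - i))"
      using that by (simp add: absv_mult mult_ac power_add[symmetric])
    also have "\<dots> \<le> A * B" using p q AB t by (intro mult_mono) auto
    finally show ?thesis .
  qed
  then show ?thesis
    unfolding coeff_mult using t AB by (intro absv_sum_mult_le_bound) auto
qed

lemma absv_coeff_prod_linear_factors_le_1:
  assumes "\<forall>v\<in>V. absv v \<le> 1"
  shows "absv (coeff (\<Prod>v\<in>V. [:- v, 1:]) n) \<le> 1"
  using assms
proof (induction V arbitrary: n rule: infinite_finite_induct)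
  case (insert v V)
  have "absv (coeff [:- v, 1:] i) * 1 ^ i \<le> 1" for i
    using insert.prems by (cases i) (auto simp: coeff_pCons split: nat.split)
  then show ?case
    using absv_coeff_mult_weighted_le[of 1 "[:- v, 1:]" 1 "\<Prod>v\<in>V. [:- v, 1:]" 1 n] insert
    by simp
qed auto

lemma absv_coeff_lagrange_basis_le_1:
  assumes "u \<in> U" "\<forall>u\<in>U. absv u \<le> 1" "\<forall>u\<in>U. \<forall>v\<in>U. u \<noteq> v \<longrightarrow> absv (u - v) = 1"
  shows "absv (coeff (lagrange_basis U u) n) \<le> 1"
proof -
  have "(\<Prod>v\<in>U - {u}. absv (u - v)) = 1"
    using assms by (intro prod.neutral) auto
  then have "absv (\<Prod>v\<in>U - {u}. u - v) = 1"
    by (simp add: absv_prod)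
  then show ?thesis
    using absv_coeff_prod_linear_factors_le_1[of "U - {u}" n] assms(2)
    by (simp add: lagrange_basis_def absv_mult absv_inverse)
qed

lemma absv_coeff_le_Max_poly:
  assumes U: "finite U" "degree P < card U"
    and spread: "\<forall>u\<in>U. absv u \<le> 1" "\<forall>u\<in>U. \<forall>v\<in>U. u \<noteq> v \<longrightarrow> absv (u - v) = 1"
  shows "absv (coeff P i) \<le> Max ((\<lambda>u. absv (poly P u)) ` U)" (is "_ \<le> ?M")
proof -
  obtain u0 where "u0 \<in> U" using U(2) by fastforce
  then have "absv (poly P u0) \<le> ?M" using U(1) by simp
  then have M: "?M \<ge> 0" using absv_nonneg order.trans by blast
  have "coeff P i = (\<Sum>u\<in>U. poly P u * coeff (lagrange_basis U u) i)"
    by (subst lagrange_interpolation[OF U]) (simp add: coeff_sum)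
  also have "absv \<dots> \<le> ?M"
  proof (rule absv_sum_le_bound[OF M])
    fix u assume u: "u \<in> U"
    have "absv (poly P u) * absv (coeff (lagrange_basis U u) i) \<le> absv (poly P u) * 1"
      using absv_coeff_lagrange_basis_le_1[OF u spread] by (intro mult_left_mono) auto
    also have "\<dots> \<le> ?M" using u U(1) by simp
    finally show "absv (poly P u * coeff (lagrange_basis U u) i) \<le> ?M"
      by (simp add: absv_mult)
  qed
  finally show ?thesis .
qed

lemma absv_coeff_roots_poly_le:
  assumes "\<forall>b\<in>set bs. absv b \<le> t" "t \<ge> 0"
  shows "absv (coeff (roots_poly bs) n) * t ^ n \<le> t ^ length bs"
  using assms(1)
proof (induction bs arbitrary: n)
  case (Cons b bs)
  have "absv (coeff [:- b, 1:] i) * t ^ i \<le> t" for i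
    using Cons.prems assms(2) by (cases i) (auto simp: coeff_pCons split: nat.split)
  then show ?case
    using absv_coeff_mult_weighted_le[OF assms(2), of "[:- b, 1:]" t "roots_poly bs" "t ^ length bs" n]
      Cons by (simp del: mult_pCons_left)
qed (use assms(2) in simp)

lemma absv_poly_roots_poly_le:
  assumes "\<forall>b\<in>set bs. absv b \<le> t" "absv u \<le> t"
  shows "absv (poly (roots_poly bs) u) \<le> t ^ length bs"
  using assms(1)
proof (induction bs)
  case (Cons b bs)
  have "absv (u - b) \<le> t" using absv_diff_le_max[of u b] Cons.prems assms(2) by auto
  with Cons show ?case
    by (simp add: poly_roots_poly absv_mult mult_mono order.trans[OF absv_nonneg assms(2)]
        del: roots_poly_Cons)
qed simp

definition dominated_on_disk :: "real \<Rightarrow> 'a poly \<Rightarrow> bool" where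
  "dominated_on_disk t h \<longleftrightarrow> (\<forall>j\<ge>1. absv (coeff h j) * t ^ j < absv (coeff h 0))"

lemma dominated_on_disk_coeff_0:
  assumes "dominated_on_disk t h" "t \<ge> 0"
  shows "coeff h 0 \<noteq> 0"
  using assms order.strict_trans1[of 0 "absv (coeff h 1) * t"]
  unfolding dominated_on_disk_def by fastforce

lemma absv_poly_dominated:
  assumes h: "dominated_on_disk t h" and w: "absv w \<le> t"
  shows "absv (poly h w) = absv (coeff h 0)"
proof -
  have t: "t \<ge> 0" using w order.trans[OF absv_nonneg] by blast
  have "poly h w = (\<Sum>i<Suc (degree h). coeff h i * w ^ i)"
    by (simp add: poly_altdef lessThan_Suc_atMost)
  also have "\<dots> = coeff h 0 + (\<Sum>i<degree h. coeff h (Suc i) * w ^ Suc i)"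
    by (subst sum.lessThan_Suc_shift) simp
  also have "absv \<dots> = absv (coeff h 0)"
  proof (rule absv_add_eq_left, rule absv_sum_less_bound)
    show "absv (coeff h 0) > 0" using dominated_on_disk_coeff_0[OF h t] absv_pos by blast
    fix i
    have "absv (coeff h (Suc i) * w ^ Suc i) = absv (coeff h (Suc i)) * absv w ^ Suc i"
      by (simp only: absv_mult absv_power)
    also have "\<dots> \<le> absv (coeff h (Suc i)) * t ^ Suc i"
      using w by (intro mult_left_mono power_mono) auto
    also have "\<dots> < absv (coeff h 0)"
      using h[unfolded dominated_on_disk_def, rule_format, of "Suc i"] by simp
    finally show "absv (coeff h (Suc i) * w ^ Suc i) < absv (coeff h 0)" .
  qed
  finally show ?thesis .
qed

lemma poly_dominated_nonzero:
  assumes "dominated_on_disk t h" "absv w \<le> t"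
  shows "poly h w \<noteq> 0"
  using absv_poly_dominated[OF assms]
    dominated_on_disk_coeff_0[OF assms(1) order.trans[OF absv_nonneg assms(2)]] by auto

lemma absv_coeff_roots_poly_mult_dominated:
  assumes bs: "\<forall>b\<in>set bs. absv b \<le> t" and h: "dominated_on_disk t h" and t: "t > 0"
  shows "absv (coeff (roots_poly bs * h) (length bs)) = absv (coeff h 0)"
proof -
  let ?m = "length bs"
  have "coeff (roots_poly bs * h) ?m = (\<Sum>i\<le>?m. coeff (roots_poly bs) i * coeff h (?m - i))"
    by (rule coeff_mult)
  also have "\<dots> = coeff h 0 + (\<Sum>i<?m. coeff (roots_poly bs) i * coeff h (?m - i))"
    by (simp add: lessThan_Suc_atMost[symmetric] coeff_roots_poly_length)
  also have "absv \<dots> = absv (coeff h 0)"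
  proof (rule absv_add_eq_left, rule absv_sum_less_bound)
    show "absv (coeff h 0) > 0" using dominated_on_disk_coeff_0[OF h] t absv_pos by simp
    fix i assume i: "i \<in> {..<?m}"
    have "absv (coeff (roots_poly bs) i * coeff h (?m - i)) * t ^ ?m =
        (absv (coeff (roots_poly bs) i) * t ^ i) * (absv (coeff h (?m - i)) * t ^ (?m - i))"
      using i by (simp add: absv_mult mult_ac power_add[symmetric])
    also have "\<dots> \<le> t ^ ?m * (absv (coeff h (?m - i)) * t ^ (?m - i))"
      using absv_coeff_roots_poly_le[OF bs, of i] t by (intro mult_right_mono) auto
    also have "\<dots> < t ^ ?m * absv (coeff h 0)"
      using h i t unfolding dominated_on_disk_def by (intro mult_strict_left_mono) auto
    finally show "absv (coeff (roots_poly bs) i * coeff h (?m - i)) < absv (coeff h 0)"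
      using t by (simp add: mult.commute)
  qed
  finally show ?thesis .
qed

lemma dominated_on_disk_linear_factor:
  assumes h: "dominated_on_disk t h" and t: "t > 0" and \<beta>: "absv \<beta> > t"
  shows "dominated_on_disk t ([:- \<beta>, 1:] * h)"
  unfolding dominated_on_disk_def
proof (intro allI impI)
  fix j :: nat assume j: "j \<ge> 1"
  let ?c0 = "absv (coeff ([:- \<beta>, 1:] * h) 0)"
  have c0: "?c0 = absv \<beta> * absv (coeff h 0)"
    by (simp add: coeff_linear_factor_mult absv_mult del: mult_pCons_left)
  have A: "absv (- \<beta> * coeff h j) * t ^ j < ?c0"
    using h j \<beta> t unfolding c0 dominated_on_disk_def
    by (simp add: absv_mult mult.assoc mult_strict_left_mono)
  have "absv (coeff h (j - 1)) * t ^ (j - 1) \<le> absv (coeff h 0)"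
  proof (cases "j = 1")
    case False
    then have "j - 1 \<ge> 1" using j by simp
    then show ?thesis using h unfolding dominated_on_disk_def by (blast intro: less_imp_le)
  qed simp
  then have "absv (coeff h (j - 1)) * t ^ j \<le> absv (coeff h 0) * t"
    using j t by (cases j) (auto simp: mult_ac intro: mult_right_mono)
  also have "\<dots> < ?c0"
    using \<beta> dominated_on_disk_coeff_0[OF h] t absv_pos unfolding c0
    by (simp add: mult.commute mult_strict_left_mono)
  finally have B: "absv (coeff h (j - 1)) * t ^ j < ?c0" .
  have "coeff ([:- \<beta>, 1:] * h) j = - \<beta> * coeff h j + coeff h (j - 1)"
    using j by (simp add: coeff_linear_factor_mult del: mult_pCons_left)
  then have "absv (coeff ([:- \<beta>, 1:] * h) j)
      \<le> max (absv (- \<beta> * coeff h j)) (absv (coeff h (j - 1)))"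
    by (simp only: absv_add_le_max)
  then have "absv (coeff ([:- \<beta>, 1:] * h) j) * t ^ j
      \<le> max (absv (- \<beta> * coeff h j)) (absv (coeff h (j - 1))) * t ^ j"
    using t by (intro mult_right_mono) auto
  also have "\<dots> < ?c0"
    using A B t by (simp add: max_mult_distrib_right)
  finally show "absv (coeff ([:- \<beta>, 1:] * h) j) * t ^ j < ?c0" .
qed

lemma absv_poly_le_supnorm:
  assumes z: "absv (z - a) \<le> r"
  shows "absv (poly g z) \<le> supnorm absv g a r"
proof -
  define M where "M = (\<Sum>i\<le>degree g. absv (coeff g i) * (absv a + r) ^ i)"
  have "absv (poly g w) \<le> M" if w: "absv (w - a) \<le> r" for w
  proof -
    have "absv w \<le> absv (w - a) + absv a" using absv_add_le[of "w - a" a] by simp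
    then have wb: "absv w \<le> absv a + r" using w by simp
    have "absv (poly g w) \<le> (\<Sum>i\<le>degree g. absv (coeff g i * w ^ i))"
      unfolding poly_altdef by (rule absv_sum_le)
    also have "\<dots> \<le> M" unfolding M_def
      using wb by (intro sum_mono) (simp add: absv_mult absv_power mult_left_mono power_mono)
    finally show ?thesis .
  qed
  then have "bdd_above ((\<lambda>z. absv (poly g z)) ` {z. absv (z - a) \<le> r})"
    by (intro bdd_aboveI2) auto
  then show ?thesis unfolding supnorm_def using z by (intro cSup_upper) auto
qed

lemma escape_radius:
  fixes f :: "'a poly"
  assumes deg: "degree f \<ge> 2"
  obtains B where "\<And>z. B < absv z \<Longrightarrow> absv z + 1 \<le> absv (poly f z)"
proof
  let ?d = "degree f" and ?A = "absv (lead_coeff f)"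
  define B where "B = 2 / ?A + 1 + (\<Sum>i<?d. absv (coeff f i) / ?A)"
  have A: "?A > 0" using deg by (intro absv_pos) auto
  have S: "0 \<le> (\<Sum>i<?d. absv (coeff f i) / ?A)" by (intro sum_nonneg) simp
  fix z assume z: "B < absv z"
  have zA: "2 / ?A < absv z" "0 \<le> 2 / ?A" using z S A unfolding B_def by auto
  then have z1: "absv z > 1" and A2: "?A * absv z \<ge> 2"
    using z S A unfolding B_def by (linarith, simp add: divide_less_eq mult.commute)
  have "absv (coeff f i) < ?A * absv z" if "i < ?d" for i
  proof -
    have "absv (coeff f i) / ?A \<le> (\<Sum>i<?d. absv (coeff f i) / ?A)"
      using that by (intro member_le_sum) auto
    then have "absv (coeff f i) / ?A < absv z" using z zA unfolding B_def by linarith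
    then show ?thesis using A by (simp add: divide_less_eq mult.commute)
  qed
  then have lower: "absv (coeff f i * z ^ i) < absv (lead_coeff f * z ^ ?d)" if "i < ?d" for i
  proof -
    have "absv (coeff f i) * absv z ^ i < ?A * absv z * absv z ^ i"
      using that \<open>\<And>i. i < ?d \<Longrightarrow> _\<close> z1 by (intro mult_strict_right_mono) auto
    also have "\<dots> \<le> ?A * absv z ^ ?d"
      using that z1 A by (simp add: mult.assoc power_increasing flip: power_Suc)
    finally show ?thesis by (simp add: absv_mult absv_power)
  qed
  have "poly f z = lead_coeff f * z ^ ?d + (\<Sum>i<?d. coeff f i * z ^ i)"
    by (simp add: poly_altdef lessThan_Suc_atMost[symmetric])
  also have "absv \<dots> = absv (lead_coeff f * z ^ ?d)"
  proof (rule absv_add_eq_left, rule absv_sum_less_bound)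
    show "absv (lead_coeff f * z ^ ?d) > 0" using A z1 by (simp add: absv_mult absv_power)
  qed (use lower in auto)
  also have "\<dots> = ?A * absv z ^ ?d" by (simp add: absv_mult absv_power)
  also have "\<dots> \<ge> (?A * absv z) * absv z"
    using deg z1 A by (simp add: power2_eq_square[symmetric] mult.assoc power_increasing)
  finally show "absv z + 1 \<le> absv (poly f z)"
    using A2 z1 mult_right_mono[OF A2, of "absv z"] by linarith
qed

lemma crit_quadratic_bound:
  fixes f :: "'a poly"
  assumes c: "poly (pderiv f) c = 0" and r: "r \<ge> 0"
  shows "\<exists>C\<ge>0. \<forall>w. absv w \<le> r \<longrightarrow> absv (poly f (c + w) - poly f c) \<le> C * absv w ^ 2"
proof -
  define G where "G = pcompose f [:c, 1:] - [:poly f c:]"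
  have pG: "poly G w = poly f (c + w) - poly f c" for w by (simp add: G_def poly_pcompose)
  have g0: "coeff G 0 = 0" using pG[of 0] by (simp add: poly_0_coeff_0[symmetric])
  have "pderiv G = pcompose (pderiv f) [:c, 1:]"
    by (simp add: G_def pderiv_diff pderiv_pcompose pderiv_pCons)
  then have "poly (pderiv G) 0 = 0" using c by (simp add: poly_pcompose)
  then have g1: "coeff G 1 = 0" by (simp add: poly_0_coeff_0 coeff_pderiv)
  define C where "C = (\<Sum>i\<le>degree G. absv (coeff G i) * r ^ (i - 2))"
  have "absv (poly f (c + w) - poly f c) \<le> C * absv w ^ 2" if w: "absv w \<le> r" for w
  proof -
    have summand: "absv (coeff G i * w ^ i) \<le> absv (coeff G i) * r ^ (i - 2) * absv w ^ 2" for i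
    proof (cases "i < 2")
      case True
      then show ?thesis using g0 g1 by (auto simp: less_2_cases_iff)
    next
      case False
      then have "i - 2 + 2 = i" by simp
      then have "absv w ^ i = absv w ^ (i - 2) * absv w ^ 2" by (metis power_add)
      then show ?thesis using w
        by (simp add: absv_mult absv_power mult_ac mult_left_mono mult_right_mono power_mono)
    qed
    have "absv (poly f (c + w) - poly f c) = absv (\<Sum>i\<le>degree G. coeff G i * w ^ i)"
      unfolding pG[symmetric] by (simp only: poly_altdef)
    also have "\<dots> \<le> (\<Sum>i\<le>degree G. absv (coeff G i * w ^ i))" by (rule absv_sum_le)
    also have "\<dots> \<le> C * absv w ^ 2"
      unfolding C_def sum_distrib_right by (intro sum_mono summand)
    finally show ?thesis .
  qed
  moreover have "C \<ge> 0" unfolding C_def using r by (intro sum_nonneg) simp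
  ultimately show ?thesis by blast
qed

end

section \<open>Algebraically closed ultrametric fields\<close>

locale ultrametric_acf = ultrametric_abs +
  assumes poly_root_exists: "degree (p :: 'a poly) \<ge> 1 \<Longrightarrow> \<exists>z. poly p z = 0"
begin

lemma linear_factor_exists:
  fixes p :: "'a poly"
  assumes "degree p \<ge> 1"
  obtains \<beta> q where "p = [:- \<beta>, 1:] * q" "degree q < degree p"
proof -
  obtain \<beta> where "poly p \<beta> = 0" using poly_root_exists[OF assms] by blast
  then obtain q where q: "p = [:- \<beta>, 1:] * q" by (metis dvdE poly_eq_0_iff_dvd)
  then have "q \<noteq> 0" using assms by auto
  then have "degree q < degree p" using q by (simp add: degree_mult_eq del: mult_pCons_left)
  then show ?thesis using q that by blast
qed

lemma roots_poly_factorization: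
  fixes p :: "'a poly"
  shows "\<exists>bs. p = smult (lead_coeff p) (roots_poly bs)"
proof (induction "degree p" arbitrary: p rule: less_induct)
  case less
  show ?case
  proof (cases "degree p \<ge> 1")
    case True
    then obtain \<beta> q where q: "p = [:- \<beta>, 1:] * q" "degree q < degree p"
      by (rule linear_factor_exists)
    obtain bs where "q = smult (lead_coeff q) (roots_poly bs)" using less.hyps[OF q(2)] by blast
    moreover have "lead_coeff p = lead_coeff q"
      using q(1) lead_coeff_mult[of "[:- \<beta>, 1:]" q] by (simp del: mult_pCons_left)
    ultimately have "p = smult (lead_coeff p) (roots_poly (\<beta> # bs))"
      using q(1) by (metis mult_smult_right roots_poly_Cons)
    then show ?thesis by blast
  next
    case False
    then have "degree p = 0" by simp
    then have "p = smult (lead_coeff p) (roots_poly [])"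
      by (metis degree_0_id roots_poly_Nil smult_one)
    then show ?thesis by blast
  qed
qed

lemma disk_factorization:
  fixes p :: "'a poly"
  assumes "p \<noteq> 0" "t > 0"
  shows "\<exists>bs h. p = roots_poly bs * h \<and> (\<forall>b\<in>set bs. absv b \<le> t) \<and> dominated_on_disk t h"
  using assms(1)
proof (induction "degree p" arbitrary: p rule: less_induct)
  case less
  show ?case
  proof (cases "degree p \<ge> 1")
    case True
    then obtain \<beta> q where q: "p = [:- \<beta>, 1:] * q" "degree q < degree p"
      by (rule linear_factor_exists)
    moreover have "q \<noteq> 0" using less.prems q(1) by auto
    ultimately obtain bs h where IH: "q = roots_poly bs * h" "\<forall>b\<in>set bs. absv b \<le> t"
        "dominated_on_disk t h"
      using less.hyps by blast
    show ?thesis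
    proof (cases "absv \<beta> \<le> t")
      case True
      then show ?thesis using IH q(1)
        by (intro exI[of _ "\<beta> # bs"] exI[of _ h]) (simp add: mult.assoc del: mult_pCons_left)
    next
      case False
      then show ?thesis using IH q(1) dominated_on_disk_linear_factor[OF IH(3) assms(2)]
        by (intro exI[of _ bs] exI[of _ "[:- \<beta>, 1:] * h"])
           (simp add: mult.left_commute del: mult_pCons_left)
    qed
  next
    case False
    then have "degree p = 0" by simp
    then have "coeff p 0 \<noteq> 0" using less.prems by (metis leading_coeff_0_iff)
    then have "dominated_on_disk t p"
      using \<open>degree p = 0\<close> by (simp add: dominated_on_disk_def coeff_eq_0 absv_pos)
    then show ?thesis by (intro exI[of _ "[]"] exI[of _ p]) simp
  qed
qed

lemma exists_of_nat_absv_eq_1: "\<exists>N > D. absv (of_nat N :: 'a) = 1"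
  using absv_of_nat_or_Suc_eq_1[of "Suc D"] by (metis less_Suc_eq)

text \<open>The \<open>N\<close>-th roots of unity for \<open>absv (of_nat N) = 1\<close>: evaluating the derivative of
  \<open>X\<^sup>N - 1\<close> at a root \<open>u\<close> shows that the distances from \<open>u\<close> to the other roots
  have product \<open>1\<close>, and none of them exceeds \<open>1\<close>.\<close>

lemma roots_of_unity_unit_distance:
  assumes N: "absv (of_nat N :: 'a) = 1" "N > 0"
    and bs: "roots_poly bs = monom 1 N - 1" and u: "u \<in> set bs"
  shows "absv u = 1" and "\<forall>b\<in>set (remove1 u bs). absv (u - b) = 1"
proof -
  have root: "b ^ N = 1" if "b \<in> set bs" for b
  proof -
    have "poly (monom 1 N - 1) b = 0"
      using that by (simp only: bs[symmetric] poly_roots_poly_eq_0_iff)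
    then show ?thesis by (simp add: poly_monom)
  qed
  have abs1: "absv b = 1" if "b \<in> set bs" for b
  proof -
    have "absv b ^ N = 1 ^ N" using root[OF that] by (metis absv_1 absv_power power_one)
    then show ?thesis using power_eq_iff_eq_base[OF N(2), of "absv b" 1] by simp
  qed
  then show "absv u = 1" using u by blast
  let ?L = "roots_poly (remove1 u bs)"
  have "poly ?L u = poly (pderiv (roots_poly bs)) u"
    by (simp add: roots_poly_remove1[OF u] pderiv_mult pderiv_pCons del: mult_pCons_left)
  also have "\<dots> = of_nat N * u ^ (N - 1)"
    by (simp add: bs pderiv_diff pderiv_monom poly_monom)
  finally have "absv (poly ?L u) = 1"
    using N(1) abs1[OF u] by (simp add: absv_mult absv_power)
  then have "prod_list (map (\<lambda>b. absv (u - b)) (remove1 u bs)) = 1"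
    by (simp add: poly_roots_poly absv_prod_list comp_def)
  moreover have "absv (u - b) \<le> 1" if "b \<in> set (remove1 u bs)" for b
  proof -
    have "b \<in> set bs" using that set_remove1_subset by fast
    then show ?thesis using absv_diff_le_max[of u b] abs1 u by simp
  qed
  ultimately show "\<forall>b\<in>set (remove1 u bs). absv (u - b) = 1"
    using prod_list_unit_interval_eq_1[of "map (\<lambda>b. absv (u - b)) (remove1 u bs)"] by auto
qed

lemma exists_unit_distance_points:
  "\<exists>U. finite U \<and> D < card U \<and> (\<forall>u\<in>U. absv u \<le> 1) \<and>
     (\<forall>u\<in>U. \<forall>v\<in>U. u \<noteq> v \<longrightarrow> absv (u - v) = 1)"
proof -
  obtain N where N: "D < N" "absv (of_nat N :: 'a) = 1"
    using exists_of_nat_absv_eq_1 by blast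
  define R :: "'a poly" where "R = monom 1 N - 1"
  have cR: "coeff R N = 1" using N(1) by (simp add: R_def)
  moreover have "degree R \<le> N"
    unfolding R_def by (rule order.trans[OF degree_diff_le_max]) (simp add: degree_monom_le)
  ultimately have R: "degree R = N" using le_degree[of R N] by simp
  then have "lead_coeff R = 1" using cR by simp
  then obtain bs where "R = roots_poly bs" using roots_poly_factorization[of R] by auto
  then have bs: "roots_poly bs = monom 1 N - 1" and "length bs = N"
    using R by (simp_all add: R_def degree_roots_poly)
  have "N > 0" using N(1) by simp
  note spread = roots_of_unity_unit_distance[OF N(2) \<open>N > 0\<close> bs]
  have "u \<notin> set (remove1 u bs)" if "u \<in> set bs" for u
    using spread(2)[OF that] by fastforce
  then have "distinct bs" by (rule distinct_if_notin_remove1)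
  then show ?thesis
    using N(1) spread \<open>length bs = N\<close>
    by (intro exI[of _ "set bs"]) (auto simp: distinct_card)
qed

lemma exists_max_modulus_point:
  fixes P :: "'a poly"
  assumes \<beta>: "\<beta> \<noteq> 0"
  obtains w where "absv w \<le> absv \<beta>" "\<And>i. absv (coeff P i) * absv \<beta> ^ i \<le> absv (poly P w)"
proof -
  define Q where "Q = pcompose P [:0, \<beta>:]"
  have "degree Q \<le> degree P" using \<beta> by (simp add: Q_def degree_pcompose)
  obtain U where U: "finite U" "degree P < card U" "\<forall>u\<in>U. absv u \<le> 1"
      "\<forall>u\<in>U. \<forall>v\<in>U. u \<noteq> v \<longrightarrow> absv (u - v) = 1"
    using exists_unit_distance_points by blast
  then have "U \<noteq> {}" by auto
  then obtain u where u: "u \<in> U" "absv (poly Q u) = Max ((\<lambda>u. absv (poly Q u)) ` U)"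
    using Max_in[of "(\<lambda>u. absv (poly Q u)) ` U"] U(1) by fastforce
  show ?thesis
  proof
    show "absv (\<beta> * u) \<le> absv \<beta>"
      using U(3) u(1) mult_left_le[of "absv u" "absv \<beta>"] by (simp add: absv_mult)
    fix i
    have "absv (coeff P i) * absv \<beta> ^ i = absv (coeff Q i)"
      by (simp add: Q_def coeff_pcompose_linear absv_mult absv_power)
    also have "\<dots> \<le> absv (poly Q u)"
      using u absv_coeff_le_Max_poly[of U Q] U \<open>degree Q \<le> degree P\<close> by simp
    also have "poly Q u = poly P (\<beta> * u)" by (simp add: Q_def poly_pcompose mult.commute)
    finally show "absv (coeff P i) * absv \<beta> ^ i \<le> absv (poly P (\<beta> * u))" .
  qed
qed

lemma pcompose_shift_minus_const_nonzero:
  fixes f :: "'a poly"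
  assumes "degree f \<ge> 1"
  shows "pcompose f [:x, 1:] - [:c:] \<noteq> 0"
proof
  assume "pcompose f [:x, 1:] - [:c:] = 0"
  then have "degree (pcompose f [:x, 1:]) = 0" by (metis degree_pCons_0 eq_iff_diff_eq_0)
  then show False using assms by (simp add: degree_pcompose)
qed

lemma loc_deg_disk_eq_length:
  fixes f :: "'a poly"
  assumes deg: "degree f \<ge> 1" and t: "t > 0"
    and fac: "pcompose f [:x, 1:] - [:poly f x:] = roots_poly bs * h"
    and bs: "\<forall>b\<in>set bs. absv b \<le> t" and h: "dominated_on_disk t h"
  shows "loc_deg_disk absv f x t = length bs"
proof -
  define F where "F = f - [:poly f x:]"
  define Q where "Q = roots_poly bs * h"
  have Q: "Q = pcompose F [:x, 1:]" by (simp add: Q_def F_def pcompose_diff fac)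
  have Qnz: "Q \<noteq> 0"
    unfolding Q_def fac[symmetric] by (rule pcompose_shift_minus_const_nonzero[OF deg])
  then have Fnz: "F \<noteq> 0" using Q by auto
  define W where "W = {w. absv w \<le> t \<and> poly Q w = 0}"
  have "finite W" unfolding W_def using poly_roots_finite[OF Qnz] by (auto elim: finite_subset[rotated])
  have shift: "poly F z = poly Q (z - x)" for z by (simp add: Q poly_pcompose)
  have W: "{z. absv (z - x) \<le> t \<and> poly F z = 0} = (\<lambda>w. w + x) ` W"
  proof (intro equalityI subsetI)
    fix z assume "z \<in> {z. absv (z - x) \<le> t \<and> poly F z = 0}"
    then show "z \<in> (\<lambda>w. w + x) ` W" using shift[of z] by (intro image_eqI[of _ _ "z - x"]) (auto simp: W_def)
  qed (auto simp: W_def shift)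
  have "loc_deg_disk absv f x t = (\<Sum>w\<in>W. order (w + x) F)"
    unfolding loc_deg_disk_def F_def[symmetric] W by (subst sum.reindex) (auto simp: inj_on_def)
  also have "\<dots> = (\<Sum>w\<in>W. count_list bs w)"
  proof (intro sum.cong refl)
    fix w assume "w \<in> W"
    then have "order w h = 0" using poly_dominated_nonzero[OF h] by (intro order_0I) (auto simp: W_def)
    then show "order (w + x) F = count_list bs w"
      using Qnz by (simp add: Q[symmetric] order_pcompose_shift[OF Fnz, symmetric] Q_def
          order_mult order_roots_poly)
  qed
  also have "\<dots> = length bs"
    using \<open>finite W\<close> bs by (intro sum_count_set) (auto simp: W_def Q_def poly_roots_poly_eq_0_iff)
  finally show ?thesis .
qed

lemma loc_deg_disk_factorization:
  fixes f :: "'a poly"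
  assumes deg: "degree f \<ge> 1" and t: "t > 0"
  obtains bs h where "pcompose f [:x, 1:] - [:poly f x:] = roots_poly bs * h"
    "\<forall>b\<in>set bs. absv b \<le> t" "dominated_on_disk t h"
    "loc_deg_disk absv f x t = length bs" "1 \<le> length bs" "length bs \<le> degree f"
proof -
  let ?Q = "pcompose f [:x, 1:] - [:poly f x:]"
  have Qnz: "?Q \<noteq> 0" by (rule pcompose_shift_minus_const_nonzero[OF deg])
  obtain bs h where fac: "?Q = roots_poly bs * h" "\<forall>b\<in>set bs. absv b \<le> t" "dominated_on_disk t h"
    using disk_factorization[OF Qnz t] by blast
  have "poly h 0 \<noteq> 0" using poly_dominated_nonzero[OF fac(3)] t by simp
  moreover have "poly ?Q 0 = 0" by (simp add: poly_pcompose)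
  ultimately have "0 \<in> set bs" using fac(1) by (simp add: poly_roots_poly_eq_0_iff)
  then have "1 \<le> length bs" by (cases bs) auto
  moreover have "degree ?Q \<le> degree f"
    using degree_diff_le_max[of "pcompose f [:x, 1:]" "[:poly f x:]"] by (simp add: degree_pcompose)
  then have "length bs \<le> degree f"
    using fac(1) Qnz by (simp add: degree_mult_eq degree_roots_poly)
  ultimately show ?thesis
    using that fac loc_deg_disk_eq_length[OF deg t fac(1)] by blast
qed

text \<open>Write \<open>f (x + w) - f x\<close> as the product of \<open>w - b\<close> over its \<open>m\<close> zeros \<open>b\<close> in the disk
  and a factor \<open>h\<close> dominated by \<open>h 0\<close>. Then \<open>absv (f y - f x) \<le> t ^ m * absv (h 0)\<close>, while the
  coefficient of \<open>w ^ (m - 1)\<close> in the derivative has absolute value \<open>absv m * absv (h 0)\<close> and,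
  by the maximum modulus principle, is at most \<open>S / t ^ (m - 1)\<close>.\<close>

lemma loc_deg_disk_mean_value:
  fixes f :: "'a poly"
  assumes deg: "degree f \<ge> 1" and t: "absv (y - x) = t" "t > 0"
    and S: "\<And>z. absv (z - x) \<le> t \<Longrightarrow> absv (poly (pderiv f) z) \<le> S"
  shows "absv (of_nat (loc_deg_disk absv f x t) :: 'a) * absv (poly f y - poly f x) \<le> t * S"
proof -
  let ?Q = "pcompose f [:x, 1:] - [:poly f x:]"
  obtain bs h where fac: "?Q = roots_poly bs * h" "\<forall>b\<in>set bs. absv b \<le> t"
      "dominated_on_disk t h" and m: "loc_deg_disk absv f x t = length bs" "1 \<le> length bs"
    using loc_deg_disk_factorization[OF deg t(2)] by metis
  let ?m = "length bs" and ?c = "absv (coeff h 0)"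
  have "poly f y - poly f x = poly (roots_poly bs) (y - x) * poly h (y - x)"
    using arg_cong[OF fac(1), of "\<lambda>p. poly p (y - x)"] by (simp add: poly_pcompose)
  then have upper: "absv (poly f y - poly f x) \<le> t ^ ?m * ?c"
    using absv_poly_roots_poly_le[OF fac(2)] absv_poly_dominated[OF fac(3)] t
    by (simp add: absv_mult mult_right_mono)
  have "Suc (?m - 1) = ?m" using m(2) by simp
  then have "coeff (pderiv ?Q) (?m - 1) = of_nat ?m * coeff ?Q ?m" by (metis coeff_pderiv)
  then have "absv (coeff (pderiv ?Q) (?m - 1)) = absv (of_nat ?m :: 'a) * ?c"
    using absv_coeff_roots_poly_mult_dominated[OF fac(2,3) t(2)] fac(1) by (simp add: absv_mult)
  moreover obtain w where w: "absv w \<le> t"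
      "absv (coeff (pderiv ?Q) (?m - 1)) * t ^ (?m - 1) \<le> absv (poly (pderiv ?Q) w)"
    using exists_max_modulus_point[of "y - x" "pderiv ?Q"] t by (metis absv_0 less_irrefl)
  moreover have "poly (pderiv ?Q) w = poly (pderiv f) (x + w)"
    by (simp add: pderiv_diff pderiv_pcompose poly_pcompose pderiv_pCons)
  ultimately have "absv (of_nat ?m :: 'a) * ?c * t ^ (?m - 1) \<le> S"
    using S[of "x + w"] by simp
  then have "absv (of_nat ?m :: 'a) * (t ^ ?m * ?c) \<le> t * S"
    using m(2) t(2) mult_left_mono[of _ S t] by (cases ?m) (auto simp: mult_ac)
  then show ?thesis
    using upper m(1) mult_left_mono[OF upper, of "absv (of_nat ?m :: 'a)"] by simp
qed

lemma res_p_powr_kappa_le: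
  fixes f :: "'a poly"
  assumes deg: "degree f \<ge> 1" and t: "t > 0"
  shows "res_p absv powr kappa absv f \<le> absv (of_nat (loc_deg_disk absv f x t) :: 'a)"
proof -
  let ?U = "{loc_deg_pt f x |x. True} \<union> {loc_deg_disk absv f a r | a r. r > 0}"
  let ?log = "\<lambda>k::nat. log (res_p absv) (absv (of_nat k :: 'a))"
  have "loc_deg_pt f z \<le> degree f" for z
  proof -
    have "f - [:poly f z:] \<noteq> 0" using deg by (metis degree_pCons_0 eq_iff_diff_eq_0 not_one_le_zero)
    then show ?thesis
      using order_degree degree_diff_le_max[of f "[:poly f z:]"] unfolding loc_deg_pt_def
      by (metis degree_pCons_0 max_0R order.trans)
  qed
  moreover have "loc_deg_disk absv f a r \<le> degree f" if "r > 0" for a r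
    using loc_deg_disk_factorization[OF deg that, of a] by metis
  ultimately have "?U \<subseteq> {..degree f}" by auto
  then have "kappa absv f \<le> ?log (loc_deg_disk absv f x t)"
    unfolding kappa_def using t by (intro Min_le finite_imageI) (auto elim: finite_subset)
  moreover have "absv (of_nat (loc_deg_disk absv f x t) :: 'a) > 0"
    using loc_deg_disk_factorization[OF deg t, of x] by (metis absv_pos not_one_le_zero of_nat_eq_0_iff)
  ultimately show ?thesis
    using res_p_gt_1 powr_mono[of "kappa absv f" _ "res_p absv"] by fastforce
qed

lemma absv_poly_diff_le:
  fixes f :: "'a poly"
  assumes deg: "degree f \<ge> 1"
    and S: "\<And>z. absv (z - x) \<le> absv (y - x) \<Longrightarrow> absv (poly (pderiv f) z) \<le> S"
  shows "absv (poly f y - poly f x) \<le> res_p absv powr (- kappa absv f) * S * absv (y - x)"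
proof (cases "y = x")
  case False
  let ?t = "absv (y - x)" and ?p = "res_p absv" and ?k = "kappa absv f"
  have t: "?t > 0" using False by (simp add: absv_pos)
  have "?p powr ?k * absv (poly f y - poly f x)
      \<le> absv (of_nat (loc_deg_disk absv f x ?t) :: 'a) * absv (poly f y - poly f x)"
    using res_p_powr_kappa_le[OF deg t] by (intro mult_right_mono) auto
  also have "\<dots> \<le> ?t * S" using loc_deg_disk_mean_value[OF deg refl t S] by simp
  finally show ?thesis
    using res_p_gt_1 by (simp add: powr_minus divide_simps mult_ac)
qed simp

end

section \<open>Critical orbits near the Julia set\<close>

lemma card_le_2_if_gaps:
  fixes T :: "nat set"
  assumes T: "T \<subseteq> {1..n}" and g: "2 * g \<le> n"
    and gap: "\<And>k l. k \<in> T \<Longrightarrow> l \<in> T \<Longrightarrow> k < l \<Longrightarrow> n < l - k + g"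
  shows "card T \<le> 2"
proof -
  have fin: "finite T" using T finite_subset by blast
  have "T \<subseteq> {Min T, Max T}"
  proof
    fix k assume k: "k \<in> T"
    then have MinMax: "Min T \<in> T" "Max T \<in> T" "Min T \<le> k" "k \<le> Max T"
      using fin by (auto intro: Min_in Max_in)
    show "k \<in> {Min T, Max T}"
    proof (rule ccontr)
      assume "k \<notin> {Min T, Max T}"
      then have "n < k - Min T + g" "n < Max T - k + g"
        using gap[of "Min T" k] gap[of k "Max T"] k MinMax by auto
      moreover have "Max T \<le> n" "1 \<le> Min T" using T MinMax by auto
      ultimately show False using g by linarith
    qed
  qed
  then have "card T \<le> card {Min T, Max T}" by (rule card_mono[rotated]) simp
  also have "\<dots> \<le> 2" by (simp add: card_insert_if)
  finally show ?thesis .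
qed

lemma shadowing_budget:
  fixes X C R :: real
  assumes X: "X > 1" and R: "R > 0" and g: "C * R < X ^ g" and m: "1 \<le> m" "m + g \<le> n"
  shows "X ^ (m - 1) * (C * (R / X ^ n) ^ 2) < R / X ^ n"
proof -
  have "X ^ (m - 1) * (C * R) < X ^ (m - 1) * X ^ g" using g X by simp
  also have "\<dots> \<le> X ^ n" using X m by (simp flip: power_add add: power_increasing)
  finally have "X ^ (m - 1) * (C * R) / X ^ n < 1" using X by simp
  then have "X ^ (m - 1) * (C * R) / X ^ n * (R / X ^ n) < 1 * (R / X ^ n)"
    using X R by (intro mult_strict_right_mono) auto
  then show ?thesis by (simp add: power2_eq_square field_simps)
qed

locale ultrametric_poly_dynamics = ultrametric_acf absv for absv :: "'a::field_char_0 \<Rightarrow> real" +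
  fixes f :: "'a poly"
  assumes degree_ge_2: "degree f \<ge> 2"
begin

abbreviation "F \<equiv> poly f"
abbreviation "K \<equiv> filledK absv f"
abbreviation "\<xi> \<equiv> base_center absv f"
abbreviation "R \<equiv> Rf absv f"
abbreviation "X \<equiv> Xi absv f"

lemma in_filledK_if_bounded_orbit: "(\<And>n. absv ((F ^^ n) z) \<le> B) \<Longrightarrow> z \<in> K"
  unfolding filledK_def
  by (auto simp: filterlim_at_top eventually_sequentially dest!: spec[of _ "B + 1"])
     (meson add_le_same_cancel1 dual_order.trans le_refl not_one_le_zero)

lemma filledK_bounded: "\<exists>B. \<forall>z\<in>K. absv z \<le> B"
proof -
  obtain B where B: "\<And>z. B < absv z \<Longrightarrow> absv z + 1 \<le> absv (F z)"
    using escape_radius[OF degree_ge_2] by blast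
  have "z \<notin> K" if z: "B < absv z" for z
  proof -
    have "absv z + real n \<le> absv ((F ^^ n) z)" for n
    proof (induction n)
      case (Suc n)
      then have "B < absv ((F ^^ n) z)" using z by linarith
      then show ?case using B[of "(F ^^ n) z"] Suc by simp
    qed simp
    then have "filterlim (\<lambda>n. absv ((F ^^ n) z)) at_top sequentially"
      by (intro filterlim_at_top_mono[OF filterlim_real_sequentially] always_eventually)
         (smt (verit) absv_nonneg)
    then show ?thesis by (simp add: filledK_def)
  qed
  then show ?thesis by (meson not_le)
qed

lemma filledK_forward: "w \<in> K \<Longrightarrow> F w \<in> K"
  unfolding filledK_def
  using filterlim_sequentially_Suc[of "\<lambda>n. absv ((F ^^ n) w)"] by (simp add: funpow_swap1)

lemma filledK_iterate: "z \<in> K \<Longrightarrow> (F ^^ j) z \<in> K"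
  by (induction j) (simp_all add: filledK_forward)

lemma filledK_nonempty: "K \<noteq> {}"
proof -
  have "coeff (f - [:0, 1:]) (degree f) = lead_coeff f"
    using degree_ge_2 by (auto simp: coeff_pCons split: nat.split)
  moreover have "lead_coeff f \<noteq> 0" using degree_ge_2 by auto
  ultimately have "coeff (f - [:0, 1:]) (degree f) \<noteq> 0" by simp
  then have "degree (f - [:0, 1:]) \<ge> 1" using degree_ge_2 le_degree by fastforce
  then obtain z where "F z = z" using poly_root_exists[of "f - [:0, 1:]"] by auto
  then have "(F ^^ n) z = z" for n by (induction n) auto
  then have "z \<in> K" by (intro in_filledK_if_bounded_orbit[of z "absv z"]) simp
  then show ?thesis by blast
qed

lemma base_center_in_filledK: "\<xi> \<in> K"
  unfolding base_center_def using filledK_nonempty by (metis some_in_eq)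

lemma Rf_nonneg: "R \<ge> 0"
  and filledK_subset_base_disk: "z \<in> K \<Longrightarrow> absv (z - \<xi>) \<le> R"
proof -
  define Rset where "Rset = {r. r \<ge> 0 \<and> (\<exists>a. K \<subseteq> {y. absv (y - a) \<le> r})}"
  have R: "R = Inf Rset" by (simp add: Rf_def Rset_def)
  obtain B where "\<forall>z\<in>K. absv z \<le> B" using filledK_bounded by blast
  then have "max B 0 \<in> Rset" unfolding Rset_def by (intro CollectI conjI exI[of _ 0]) auto
  then have ne: "Rset \<noteq> {}" by auto
  show "R \<ge> 0" unfolding R by (rule cInf_greatest[OF ne]) (auto simp: Rset_def)
  assume z: "z \<in> K"
  show "absv (z - \<xi>) \<le> R" unfolding R
  proof (rule cInf_greatest[OF ne])
    fix r assume "r \<in> Rset"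
    then obtain a where "K \<subseteq> {y. absv (y - a) \<le> r}" unfolding Rset_def by auto
    then have "absv (z - a) \<le> r" "absv (a - \<xi>) \<le> r"
      using z base_center_in_filledK absv_minus_commute[of \<xi> a] by auto
    then show "absv (z - \<xi>) \<le> r" by (rule absv_diff_trans_le)
  qed
qed

lemma in_filledK_if_orbit_in_base_disk:
  assumes "\<And>k. absv ((F ^^ k) z - \<xi>) \<le> R"
  shows "z \<in> K"
proof (rule in_filledK_if_bounded_orbit)
  fix n
  have "absv ((F ^^ n) z) \<le> absv ((F ^^ n) z - \<xi>) + absv \<xi>"
    using absv_add_le[of "(F ^^ n) z - \<xi>" \<xi>] by simp
  then show "absv ((F ^^ n) z) \<le> R + absv \<xi>" using assms[of n] by linarith
qed

lemma absv_diff_le_Xi: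
  assumes x: "absv (x - \<xi>) \<le> R" and y: "absv (y - x) \<le> R"
  shows "absv (F y - F x) \<le> X * absv (y - x)"
proof -
  have "absv (poly (pderiv f) z) \<le> supnorm absv (pderiv f) \<xi> R" if "absv (z - x) \<le> absv (y - x)" for z
    using that y x absv_diff_trans_le[of z x R \<xi>] by (intro absv_poly_le_supnorm) auto
  from absv_poly_diff_le[OF _ this] degree_ge_2 show ?thesis by (simp add: Xi_def mult_ac)
qed

lemma Xi_gt_1:
  assumes c: "c \<in> juliaK absv f" and R: "R > 0"
  shows "X > 1"
proof (rule ccontr)
  assume "\<not> X > 1"
  have invariant: "absv (F w - \<xi>) \<le> R" if w: "absv (w - \<xi>) \<le> R" for w
  proof -
    have "absv (F w - F \<xi>) \<le> X * absv (w - \<xi>)" using absv_diff_le_Xi[OF _ w] R by simp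
    also have "\<dots> \<le> absv (w - \<xi>)"
    proof (cases "X \<ge> 0")
      case True
      then show ?thesis using \<open>\<not> X > 1\<close> mult_right_mono[of X 1 "absv (w - \<xi>)"] by simp
    next
      case False
      then show ?thesis
        using mult_nonpos_nonneg[of X "absv (w - \<xi>)"] absv_nonneg[of "w - \<xi>"] by linarith
    qed
    also have "\<dots> \<le> R" using w by simp
    finally show ?thesis
      by (rule absv_diff_trans_le[OF _ filledK_subset_base_disk[OF filledK_forward]])
         (rule base_center_in_filledK)
  qed
  obtain y where y: "absv (y - c) < R" "y \<notin> K" using c R by (auto simp: juliaK_def)
  have "absv (c - \<xi>) \<le> R" using c filledK_subset_base_disk by (simp add: juliaK_def)
  then have "absv (y - \<xi>) \<le> R" using y(1) absv_diff_trans_le[of y c R \<xi>] by simp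
  then have "absv ((F ^^ k) y - \<xi>) \<le> R" for k
    by (induction k) (simp_all add: invariant)
  then have "y \<in> K" by (rule in_filledK_if_orbit_in_base_disk)
  then show False using y(2) by contradiction
qed

lemma iterate_lipschitz:
  assumes x: "x \<in> K" and y: "absv (y - x) \<le> \<delta>" and X: "X \<ge> 1" and small: "X ^ J * \<delta> \<le> R"
  shows "absv ((F ^^ J) y - (F ^^ J) x) \<le> X ^ J * \<delta>"
  using small
proof (induction J)
  case (Suc J)
  have "\<delta> \<ge> 0" using y order.trans[OF absv_nonneg] by blast
  then have "X ^ J * \<delta> \<le> X ^ Suc J * \<delta>"
    using X by (intro mult_right_mono power_increasing) auto
  then have "X ^ J * \<delta> \<le> R" using Suc.prems by linarith
  then have IH: "absv ((F ^^ J) y - (F ^^ J) x) \<le> X ^ J * \<delta>" by (rule Suc.IH)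
  have "absv (F ((F ^^ J) y) - F ((F ^^ J) x)) \<le> X * absv ((F ^^ J) y - (F ^^ J) x)"
    using IH \<open>X ^ J * \<delta> \<le> R\<close> filledK_subset_base_disk[OF filledK_iterate[OF x]]
    by (intro absv_diff_le_Xi) auto
  also have "\<dots> \<le> X * (X ^ J * \<delta>)" using IH X by (intro mult_left_mono) auto
  finally show ?case by simp
qed (use y in simp)

lemma crit_finite: "finite (crit f)"
  unfolding crit_def using degree_ge_2 by (intro poly_roots_finite) (simp add: pderiv_eq_0_iff)

lemma crit_quadratic_bound_uniform:
  assumes r: "r \<ge> 0"
  obtains C where "C \<ge> 0"
    "\<And>c w. c \<in> crit f \<Longrightarrow> absv w \<le> r \<Longrightarrow> absv (F (c + w) - F c) \<le> C * absv w ^ 2"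
proof -
  define bound where "bound c C \<longleftrightarrow>
    C \<ge> 0 \<and> (\<forall>w. absv w \<le> r \<longrightarrow> absv (F (c + w) - F c) \<le> C * absv w ^ 2)" for c C
  have "\<exists>C. bound c C" if "c \<in> crit f" for c
    using crit_quadratic_bound[of f c r] that r unfolding crit_def bound_def by blast
  then obtain Cc where Cc: "\<And>c. c \<in> crit f \<Longrightarrow> bound c (Cc c)" by metis
  let ?C = "\<Sum>c\<in>crit f. Cc c"
  show ?thesis
  proof
    show "?C \<ge> 0" using Cc by (intro sum_nonneg) (auto simp: bound_def)
    fix c w assume c: "c \<in> crit f" and w: "absv w \<le> r"
    then have "absv (F (c + w) - F c) \<le> Cc c * absv w ^ 2" using Cc unfolding bound_def by blast
    also have "\<dots> \<le> ?C * absv w ^ 2"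
      using c crit_finite Cc by (intro mult_right_mono member_le_sum) (auto simp: bound_def)
    finally show "absv (F (c + w) - F c) \<le> ?C * absv w ^ 2" .
  qed
qed

lemma fiter_0: "fiter f 0 = [:0, 1:]"
  and fiter_Suc: "fiter f (Suc n) = pcompose f (fiter f n)"
  by (simp_all add: fiter_def)

lemma poly_fiter: "poly (fiter f n) = F ^^ n"
  by (induction n) (simp_all add: fiter_0 fiter_Suc fun_eq_iff poly_pcompose)

lemma critvals_subset: "critvals f n \<subseteq> (\<Union>c\<in>crit f. (\<lambda>k. (F ^^ k) c) ` {1..n})"
proof
  fix v assume "v \<in> critvals f n"
  then obtain w where w: "v = (F ^^ n) w" "poly (pderiv (fiter f n)) w = 0"
    by (auto simp: critvals_def poly_fiter)
  have "\<exists>c\<in>crit f. \<exists>k\<in>{1..n}. (F ^^ n) w = (F ^^ k) c" if "poly (pderiv (fiter f n)) w = 0" for n w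
    using that
  proof (induction n arbitrary: w)
    case (Suc n)
    have "poly (pderiv f) ((F ^^ n) w) * poly (pderiv (fiter f n)) w = 0"
      using Suc.prems by (simp add: fiter_Suc pderiv_pcompose poly_pcompose poly_fiter)
    then consider "(F ^^ n) w \<in> crit f" | "poly (pderiv (fiter f n)) w = 0"
      by (auto simp: crit_def)
    then show ?case
    proof cases
      case 1
      then show ?thesis by (intro bexI[where x = "(F ^^ n) w"] bexI[where x = 1]) auto
    next
      case 2
      then obtain c k where "c \<in> crit f" "k \<in> {1..n}" "(F ^^ n) w = (F ^^ k) c"
        using Suc.IH by blast
      then show ?thesis by (intro bexI[where x = c] bexI[where x = "Suc k"]) auto
    qed
  qed (simp add: fiter_0 pderiv_pCons)
  then show "v \<in> (\<Union>c\<in>crit f. (\<lambda>k. (F ^^ k) c) ` {1..n})" using w by force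
qed

lemma critvals_finite: "finite (critvals f n)"
  by (rule finite_subset[OF critvals_subset]) (simp add: crit_finite)

lemma crit_orbit_shadowing:
  assumes c: "c \<in> crit f" "c \<in> K" and r: "r \<le> R" and X: "X \<ge> 1"
    and C: "C \<ge> 0" "\<And>w. absv w \<le> R \<Longrightarrow> absv (F (c + w) - F c) \<le> C * absv w ^ 2"
    and small: "X ^ (m - 1) * (C * r ^ 2) < r"
    and z: "absv (z - c) < r" and i: "1 \<le> i" "i \<le> m"
  shows "absv ((F ^^ i) z - (F ^^ i) c) < r"
proof -
  define \<delta> where "\<delta> = C * r ^ 2"
  have "absv (F (c + (z - c)) - F c) \<le> C * absv (z - c) ^ 2" using C(2)[of "z - c"] z r by simp
  also have "\<dots> \<le> \<delta>" unfolding \<delta>_def using z C(1) by (intro mult_left_mono power_mono) auto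
  finally have step: "absv (F z - F c) \<le> \<delta>" by simp
  have "X ^ (i - 1) * \<delta> \<le> X ^ (m - 1) * \<delta>"
    using X i C(1) by (intro mult_right_mono power_increasing) (auto simp: \<delta>_def)
  then have lt: "X ^ (i - 1) * \<delta> < r" using small by (simp add: \<delta>_def)
  have "Suc (i - 1) = i" using i by simp
  then have "(F ^^ (i - 1)) (F y) = (F ^^ i) y" for y by (metis comp_apply funpow_Suc_right)
  moreover have "absv ((F ^^ (i - 1)) (F z) - (F ^^ (i - 1)) (F c)) \<le> X ^ (i - 1) * \<delta>"
    using lt r by (intro iterate_lipschitz[OF filledK_forward[OF c(2)] step X]) simp
  ultimately show ?thesis using lt by simp
qed

text \<open>If the shadowing holds up to time \<open>m\<close> and some orbit returns to the disk at time \<open>m\<close>,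
  then \<open>F ^^ m\<close> maps the disk into itself and all orbits starting there stay in the base disk;
  so the disk lies in the filled Julia set, which is impossible around a Julia point.\<close>

lemma no_return_to_shadowed_disk:
  assumes c: "c \<in> juliaK absv f" and r: "r > 0" "r \<le> R" and m: "1 \<le> m"
    and shadow: "\<And>z i. absv (z - c) < r \<Longrightarrow> 1 \<le> i \<Longrightarrow> i \<le> m \<Longrightarrow>
      absv ((F ^^ i) z - (F ^^ i) c) < r"
    and y: "absv (y - c) < r" "absv ((F ^^ m) y - c) < r"
  shows False
proof -
  have cK: "c \<in> K" using c by (simp add: juliaK_def)
  have returns: "absv ((F ^^ m) z - c) < r" if z: "absv (z - c) < r" for z
  proof -
    have "absv ((F ^^ m) z - (F ^^ m) y) < r"
      using shadow[OF z m order.refl] shadow[OF y(1) m order.refl]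
        absv_minus_commute[of "(F ^^ m) y"] absv_diff_trans_less by metis
    then show ?thesis using y(2) absv_diff_trans_less by blast
  qed
  have in_disk: "absv ((F ^^ (q * m)) z - c) < r" if "absv (z - c) < r" for q z
    using that by (induction q) (simp_all add: funpow_add returns)
  have near: "absv ((F ^^ i) w - \<xi>) \<le> R" if w: "absv (w - c) < r" and i: "i < m" for i w
  proof -
    have "absv ((F ^^ i) w - (F ^^ i) c) \<le> R"
      using shadow[OF w, of i] w i r by (cases "i = 0") auto
    then show ?thesis
      using absv_diff_trans_le filledK_subset_base_disk[OF filledK_iterate[OF cK]] by blast
  qed
  have "z \<in> K" if z: "absv (z - c) < r" for z
  proof (rule in_filledK_if_orbit_in_base_disk)
    fix k
    have "(F ^^ k) z = (F ^^ (k mod m)) ((F ^^ (k div m * m)) z)"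
      by (metis comp_apply funpow_add mod_div_mult_eq)
    then show "absv ((F ^^ k) z - \<xi>) \<le> R" using near[OF in_disk[OF z]] m by simp
  qed
  moreover obtain z where "absv (z - c) < r" "z \<notin> K" using c r by (auto simp: juliaK_def)
  ultimately show False by blast
qed

lemma Ds_eq_disk: "X > 0 \<Longrightarrow> Ds absv f (real n) c = {y. absv (y - c) < R / X ^ n}"
  by (simp add: Ds_def powr_minus powr_realpow divide_inverse)

lemma card_critvals_in_disk_le:
  assumes visits: "\<And>c'. card {k \<in> {1..n}. absv ((F ^^ k) c' - c) < r} \<le> 2"
  shows "card (critvals f n \<inter> {y. absv (y - c) < r}) \<le> 2 * card (crit f)"
proof -
  define T where "T c' = {k \<in> {1..n}. absv ((F ^^ k) c' - c) < r}" for c'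
  have "critvals f n \<inter> {y. absv (y - c) < r} \<subseteq> (\<Union>c'\<in>crit f. (\<lambda>k. (F ^^ k) c') ` T c')"
  proof
    fix v assume v: "v \<in> critvals f n \<inter> {y. absv (y - c) < r}"
    then obtain c' k where "c' \<in> crit f" "k \<in> {1..n}" "v = (F ^^ k) c'"
      using critvals_subset by blast
    then show "v \<in> (\<Union>c'\<in>crit f. (\<lambda>k. (F ^^ k) c') ` T c')" using v by (auto simp: T_def)
  qed
  then have "card (critvals f n \<inter> {y. absv (y - c) < r})
      \<le> card (\<Union>c'\<in>crit f. (\<lambda>k. (F ^^ k) c') ` T c')"
    by (rule card_mono[rotated]) (auto simp: crit_finite T_def)
  also have "\<dots> \<le> (\<Sum>c'\<in>crit f. card ((\<lambda>k. (F ^^ k) c') ` T c'))"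
    by (rule card_UN_le[OF crit_finite])
  also have "\<dots> \<le> (\<Sum>c'\<in>crit f. 2)"
    using visits by (intro sum_mono order.trans[OF card_image_le]) (auto simp: T_def)
  finally show ?thesis by simp
qed

lemma card_critvals_in_Ds_le:
  assumes R: "R > 0" and X: "X > 1"
  obtains N where "N \<ge> 1" "\<And>c n. c \<in> crit f \<inter> juliaK absv f \<Longrightarrow> N \<le> n \<Longrightarrow>
    card (critvals f n \<inter> Ds absv f (real n) c) \<le> 2 * card (crit f)"
proof -
  obtain C where C: "C \<ge> 0"
    "\<And>c w. c \<in> crit f \<Longrightarrow> absv w \<le> R \<Longrightarrow> absv (F (c + w) - F c) \<le> C * absv w ^ 2"
    using crit_quadratic_bound_uniform R by (metis less_le)
  obtain g :: nat where g: "C * R < X ^ g" using real_arch_pow[OF X] by blast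
  show ?thesis
  proof (rule that[of "2 * g + 1"])
    fix c n assume c: "c \<in> crit f \<inter> juliaK absv f" and n: "2 * g + 1 \<le> n"
    define r where "r = R / X ^ n"
    have r: "r > 0" "r \<le> R" using R X by (auto simp: r_def field_simps)
    have cK: "c \<in> K" using c by (simp add: juliaK_def)
    have shadow: "absv ((F ^^ i) z - (F ^^ i) c) < r"
      if "1 \<le> m" "m + g \<le> n" "absv (z - c) < r" "1 \<le> i" "i \<le> m" for m z i
      using crit_orbit_shadowing[of c r C m z i] shadowing_budget[OF X R g, of m n] c cK r X C that
      by (simp add: r_def)
    have "card {k \<in> {1..n}. absv ((F ^^ k) c' - c) < r} \<le> 2" for c'
    proof (rule card_le_2_if_gaps)
      fix k l assume kl: "k \<in> {k \<in> {1..n}. absv ((F ^^ k) c' - c) < r}"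
        "l \<in> {k \<in> {1..n}. absv ((F ^^ k) c' - c) < r}" "k < l"
      have "(F ^^ (l - k)) ((F ^^ k) c') = (F ^^ l) c'"
        using kl(3) by (metis comp_apply funpow_add le_add_diff_inverse2 less_imp_le)
      then show "n < l - k + g"
        using no_return_to_shadowed_disk[of c r "l - k" "(F ^^ k) c'"] shadow[of "l - k"] c r kl
        by force
    qed (use n in auto)
    then show "card (critvals f n \<inter> Ds absv f (real n) c) \<le> 2 * card (crit f)"
      using card_critvals_in_disk_le[of n c r] X by (simp add: Ds_eq_disk r_def)
  qed simp
qed

end

theorem lemma2p8:
  fixes absv :: "'a::field_char_0 \<Rightarrow> real" and f :: "'a poly"
  assumes "nonarch_complete_acf absv"
    and "degree f \<ge> 2"
    and "crit f \<inter> juliaK absv f \<noteq> {}"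
  shows "\<exists>M N :: nat. M \<ge> 1 \<and> N \<ge> 1 \<and>
    (\<forall>c \<in> crit f \<inter> juliaK absv f. \<forall>n \<ge> N.
       finite (critvals f n \<inter> Ds absv f (real n) c) \<and>
       card (critvals f n \<inter> Ds absv f (real n) c) \<le> M)"
proof -
  interpret ultrametric_poly_dynamics absv f
    by unfold_locales (use assms(1,2) in \<open>auto simp: nonarch_complete_acf_def\<close>)
  have fin: "finite (critvals f n \<inter> S)" for n S using critvals_finite by blast
  show ?thesis
  proof (cases "R > 0")
    case True
    obtain c where "c \<in> juliaK absv f" using assms(3) by blast
    then have "X > 1" using Xi_gt_1 True by blast
    then obtain N where N: "N \<ge> 1" "\<And>c n. c \<in> crit f \<inter> juliaK absv f \<Longrightarrow> N \<le> n \<Longrightarrow>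
        card (critvals f n \<inter> Ds absv f (real n) c) \<le> 2 * card (crit f)"
      using card_critvals_in_Ds_le[OF True] by blast
    have "\<forall>c\<in>crit f \<inter> juliaK absv f. \<forall>n\<ge>N. finite (critvals f n \<inter> Ds absv f (real n) c) \<and>
        card (critvals f n \<inter> Ds absv f (real n) c) \<le> 2 * card (crit f) + 1"
      using N(2) fin by (simp add: le_SucI)
    then show ?thesis using N(1) by (intro exI[of _ "2 * card (crit f) + 1"] exI[of _ N]) simp
  next
    case False
    then have "Ds absv f (real n) c = {}" for n c
      using Rf_nonneg by (auto simp: Ds_def leD[OF absv_nonneg])
    then show ?thesis using fin by (intro exI[of _ 1]) simp
  qed
qed

end
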